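(* Let $\lambda>0$ and let $(B,D)$ be a random pair as in the context. If $\lambda\mathbf E[B1_{\{D=\infty\}}]<1$, $\mathbf E[\min\{B,D\}]<\infty$ and $\rho=\lambda\mathbf E[B]>1$, then the equation $z_\infty=\lambda\mathbf E[\min\{z_\infty B,D\}]$ has a unique solution $z_\infty\in(0,\infty)$.
   Context: $(B,D)$ is a random pair with values in $[0,\infty]^2$ whose law $\vartheta$ satisfies $\vartheta(\{0\}\times[0,\infty])=\vartheta([0,\infty]\times\{0\})=\vartheta(\{(\infty,\infty)\})=0$; arithmetic on $[0,\infty]$ with $x\cdot\infty=\infty$ for $x>0$. *)

theory Defs
  imports "HOL-Probability.Probability"
begin

end

(*
  Write Phi z = lam * E[min (z B, D)]. Phi is monotone, so by a Knaster-Tarski argument it has a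
  fixed point in every interval [a, b] with a <= Phi a and Phi b <= b. Since
  Phi z / z = lam * E[min (B, D / z)], monotone convergence gives Phi z / z --> rho > 1 as z --> 0
  (as D > 0 a.s.) and Phi z / z --> lam * E[B 1{D = oo}] < 1 as z --> oo (the decreasing limit is
  legitimate because E[min (B, D)] < oo); this provides a and b. For uniqueness, pointwise
  z1 * min (z2 B, D) <= z2 * min (z1 B, D) for z1 < z2, with strict inequality where D < z1 B.
  At two fixed points both sides integrate to z1 z2 / lam, so min (z1 B, D) = z1 B a.s., and the
  fixed point equation for z1 then reads rho = 1.
*)

theory Submission
  imports Defs
begin

lemma mono_fixpoint_between:
  fixes f :: "real \<Rightarrow> ennreal"
  assumes mono: "mono f" and "0 \<le> a" "a \<le> b"
    and "ennreal a \<le> f a" and upper: "f b \<le> ennreal b"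
  shows "\<exists>s\<in>{a..b}. f s = ennreal s"
proof -
  define S where "S = {z \<in> {a..b}. ennreal z \<le> f z}"
  define s where "s = Sup S"
  have "a \<in> S" using assms by (simp add: S_def)
  moreover have bdd: "bdd_above S" by (auto simp: S_def intro: bdd_aboveI[of _ b])
  ultimately have s_between: "a \<le> s" "s \<le> b"
    unfolding s_def by (auto intro: cSup_upper cSup_least simp: S_def)
  have fs_le_b: "f s \<le> ennreal b" using monoD[OF mono \<open>s \<le> b\<close>] upper by simp
  then obtain r where r: "f s = ennreal r" "0 \<le> r"
    by (cases "f s") (auto simp: top_unique)
  have "s \<le> r"
    unfolding s_def
  proof (rule cSup_least)
    show "S \<noteq> {}" using \<open>a \<in> S\<close> by auto
  next
    fix z assume z: "z \<in> S"
    then have "ennreal z \<le> f s"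
      using monoD[OF mono cSup_upper[OF z bdd]] by (auto simp: S_def s_def)
    then show "z \<le> r" using r by (auto simp: ennreal_le_iff2)
  qed
  moreover have "r \<in> S"
  proof -
    have "r \<le> b" using fs_le_b r s_between assms by simp
    moreover have "ennreal r \<le> f r" using monoD[OF mono \<open>s \<le> r\<close>] r by simp
    ultimately show ?thesis using s_between \<open>s \<le> r\<close> by (simp add: S_def)
  qed
  then have "r \<le> s" unfolding s_def using bdd by (rule cSup_upper)
  ultimately show ?thesis using r s_between by auto
qed

lemma ennreal_mult_less_one_iff:
  assumes "0 < c"
  shows "ennreal c * x < 1 \<longleftrightarrow> x < ennreal (1 / c)"
proof -
  have "ennreal c * ennreal (1 / c) = 1"
    using assms by (simp add: ennreal_mult''[symmetric])
  then have "1 \<le> ennreal c * x \<longleftrightarrow> ennreal (1 / c) \<le> x"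
    using assms ennreal_mult_le_mult_iff[of "ennreal c" "ennreal (1 / c)" x] by simp
  then show ?thesis by (metis not_le)
qed

lemma ennreal_min_rescale:
  assumes "0 < z"
  shows "min (ennreal z * x) y = ennreal z * min x (ennreal (1 / z) * y)"
proof -
  have "ennreal z * (ennreal (1 / z) * y) = y"
    using assms by (simp add: mult.assoc[symmetric] ennreal_mult''[symmetric])
  then show ?thesis by (simp add: min_of_mono[OF Rings.mono_mult, symmetric])
qed

lemma ennreal_mult_min_le:
  fixes a b :: ennreal
  assumes "0 \<le> z1" "z1 \<le> z2"
  shows "ennreal z1 * min (ennreal z2 * a) b \<le> ennreal z2 * min (ennreal z1 * a) b"
proof -
  have "ennreal z1 * min (ennreal z2 * a) b = min (ennreal z1 * ennreal z2 * a) (ennreal z1 * b)"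
    by (simp add: min_of_mono[OF Rings.mono_mult, symmetric] mult.assoc)
  also have "\<dots> \<le> min (ennreal z2 * ennreal z1 * a) (ennreal z2 * b)"
    using assms by (intro min.mono mult_right_mono) (auto simp: mult.commute)
  also have "\<dots> = ennreal z2 * min (ennreal z1 * a) b"
    by (simp add: min_of_mono[OF Rings.mono_mult, symmetric] mult.assoc)
  finally show ?thesis .
qed

lemma ennreal_mult_min_less:
  fixes a b :: ennreal
  assumes "0 < z1" "z1 < z2" "b \<noteq> 0" "b < ennreal z1 * a"
  shows "ennreal z1 * min (ennreal z2 * a) b < ennreal z2 * min (ennreal z1 * a) b"
proof -
  have "ennreal z1 * min (ennreal z2 * a) b \<le> ennreal z1 * b"
    by (intro mult_left_mono) auto
  also have "\<dots> < ennreal z2 * b"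
  proof (rule ennreal_mult_strict_right_mono)
    show "b < \<top>" using \<open>b < ennreal z1 * a\<close> top.not_eq_extremum by fastforce
    show "0 < b" using \<open>b \<noteq> 0\<close> by (simp add: zero_less_iff_neq_zero)
  qed (use assms in \<open>auto simp: ennreal_lessI\<close>)
  also have "\<dots> = ennreal z2 * min (ennreal z1 * a) b"
    using assms by simp
  finally show ?thesis .
qed

lemma SUP_min_of_nat_mult_ennreal:
  fixes b d :: ennreal
  assumes "d \<noteq> 0"
  shows "(SUP n. min b (of_nat n * d)) = b"
proof -
  have "(SUP n. min b (of_nat n * d)) = min b ((SUP n. of_nat n) * d)"
    using inf_SUP[of b "\<lambda>n. of_nat n * d" UNIV] by (simp add: inf_min SUP_mult_right_ennreal)
  then show ?thesis using assms by (simp add: ennreal_SUP_of_nat_eq_top)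
qed

lemma INF_min_inverse_Suc_mult_ennreal:
  fixes b d :: ennreal
  shows "(INF n. min b (ennreal (1 / real (Suc n)) * d)) = (if d = \<infinity> then b else 0)"
proof -
  have "(INF n. ennreal (1 / real (Suc n)) * d) = (if d = \<infinity> then \<infinity> else 0)"
  proof (cases d)
    case (real r)
    have "(\<lambda>n. ennreal (r / real (Suc n))) \<longlonglongrightarrow> ennreal 0"
      by (intro tendsto_ennrealI LIMSEQ_Suc[OF lim_const_over_n])
    moreover have "decseq (\<lambda>n. ennreal (r / real (Suc n)))"
      using real by (auto simp: decseq_def intro!: ennreal_leI divide_left_mono)
    ultimately have "(INF n. ennreal (r / real (Suc n))) = 0"
      by (metis LIMSEQ_INF LIMSEQ_unique ennreal_0)
    then show ?thesis using real by (simp add: ennreal_mult''[symmetric])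
  qed (simp add: ennreal_mult_top)
  moreover have "(INF n. min b (ennreal (1 / real (Suc n)) * d))
      = min b (INF n. ennreal (1 / real (Suc n)) * d)"
    using INF_inf_const1[of UNIV b "\<lambda>n. ennreal (1 / real (Suc n)) * d"] by (simp add: inf_min)
  ultimately show ?thesis by simp
qed

lemma nn_integral_min_mult_SUP:
  assumes [measurable]: "B \<in> borel_measurable M" "D \<in> borel_measurable M"
    and "AE x in M. D x \<noteq> 0"
  shows "(SUP n. \<integral>\<^sup>+ x. min (B x) (of_nat n * D x) \<partial>M) = (\<integral>\<^sup>+ x. B x \<partial>M)"
proof -
  have "incseq (\<lambda>n x. min (B x) (of_nat n * D x))"
    by (intro monoI le_funI min.mono order.refl mult_right_mono) auto
  then have "(SUP n. \<integral>\<^sup>+ x. min (B x) (of_nat n * D x) \<partial>M)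
      = (\<integral>\<^sup>+ x. (SUP n. min (B x) (of_nat n * D x)) \<partial>M)"
    by (simp add: nn_integral_monotone_convergence_SUP)
  also have "\<dots> = (\<integral>\<^sup>+ x. B x \<partial>M)"
    using assms(3) by (intro nn_integral_cong_AE) (auto simp: SUP_min_of_nat_mult_ennreal)
  finally show ?thesis .
qed

lemma nn_integral_min_inverse_Suc_mult_INF:
  assumes [measurable]: "B \<in> borel_measurable M" "D \<in> borel_measurable M"
    and "(\<integral>\<^sup>+ x. min (B x) (D x) \<partial>M) < \<infinity>"
  shows "(INF n. \<integral>\<^sup>+ x. min (B x) (ennreal (1 / real (Suc n)) * D x) \<partial>M)
    = (\<integral>\<^sup>+ x. B x * indicator {y. D y = \<infinity>} x \<partial>M)"
proof -
  have "(INF n. \<integral>\<^sup>+ x. min (B x) (ennreal (1 / real (Suc n)) * D x) \<partial>M)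
      = (\<integral>\<^sup>+ x. (INF n. min (B x) (ennreal (1 / real (Suc n)) * D x)) \<partial>M)"
    using assms(3)
    by (intro nn_integral_monotone_convergence_INF_AE'[symmetric] AE_I2
        min.mono order.refl mult_right_mono ennreal_leI frac_le) auto
  also have "\<dots> = (\<integral>\<^sup>+ x. B x * indicator {y. D y = \<infinity>} x \<partial>M)"
    unfolding INF_min_inverse_Suc_mult_ennreal
    by (intro nn_integral_cong) (simp split: split_indicator)
  finally show ?thesis .
qed

definition capped_mean :: "'a measure \<Rightarrow> ('a \<Rightarrow> ennreal) \<Rightarrow> ('a \<Rightarrow> ennreal) \<Rightarrow> real \<Rightarrow> ennreal"
  where "capped_mean M B D z = (\<integral>\<^sup>+ x. min (ennreal z * B x) (D x) \<partial>M)"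

lemma mono_capped_mean: "mono (capped_mean M B D)"
  unfolding capped_mean_def
  by (intro monoI nn_integral_mono min.mono order.refl mult_right_mono ennreal_leI) auto

lemma capped_mean_rescale:
  assumes [measurable]: "B \<in> borel_measurable M" "D \<in> borel_measurable M"
    and "0 < z"
  shows "capped_mean M B D z = ennreal z * (\<integral>\<^sup>+ x. min (B x) (ennreal (1 / z) * D x) \<partial>M)"
  unfolding capped_mean_def ennreal_min_rescale[OF \<open>0 < z\<close>] by (rule nn_integral_cmult) measurable

lemma ex_small_le_capped_mean:
  assumes [measurable]: "B \<in> borel_measurable M" "D \<in> borel_measurable M"
    and "AE x in M. D x \<noteq> 0" and "1 < ennreal lam * (\<integral>\<^sup>+ x. B x \<partial>M)"
  shows "\<exists>a. 0 < a \<and> a \<le> 1 \<and> ennreal a \<le> ennreal lam * capped_mean M B D a"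
proof -
  have "1 < (SUP n. ennreal lam * (\<integral>\<^sup>+ x. min (B x) (of_nat n * D x) \<partial>M))"
    using assms by (simp add: nn_integral_min_mult_SUP SUP_mult_left_ennreal[symmetric])
  then obtain n where n: "1 < ennreal lam * (\<integral>\<^sup>+ x. min (B x) (of_nat n * D x) \<partial>M)"
    by (auto simp: less_SUP_iff)
  then have "n \<noteq> 0" by (intro notI) simp
  define a where "a = 1 / real n"
  have a: "0 < a" "a \<le> 1" using \<open>n \<noteq> 0\<close> by (auto simp: a_def)
  have "ennreal a = ennreal a * 1" by simp
  also have "\<dots> \<le> ennreal a * (ennreal lam * (\<integral>\<^sup>+ x. min (B x) (of_nat n * D x) \<partial>M))"
    using n by (intro mult_left_mono) auto
  also have "\<dots> = ennreal lam * capped_mean M B D a"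
    using \<open>n \<noteq> 0\<close>
    by (simp add: capped_mean_rescale a a_def mult.left_commute ennreal_of_nat_eq_real_of_nat)
  finally show ?thesis using a by blast
qed

lemma ex_large_capped_mean_le:
  assumes [measurable]: "B \<in> borel_measurable M" "D \<in> borel_measurable M"
    and "0 < lam" and "ennreal lam * (\<integral>\<^sup>+ x. B x * indicator {y. D y = \<infinity>} x \<partial>M) < 1"
    and "(\<integral>\<^sup>+ x. min (B x) (D x) \<partial>M) < \<infinity>"
  shows "\<exists>b\<ge>1. ennreal lam * capped_mean M B D b \<le> ennreal b"
proof -
  have "(INF n. \<integral>\<^sup>+ x. min (B x) (ennreal (1 / real (Suc n)) * D x) \<partial>M) < ennreal (1 / lam)"
    using assms(4)
    unfolding nn_integral_min_inverse_Suc_mult_INF[OF assms(1,2,5)]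
      ennreal_mult_less_one_iff[OF \<open>0 < lam\<close>] .
  then obtain n
    where "(\<integral>\<^sup>+ x. min (B x) (ennreal (1 / real (Suc n)) * D x) \<partial>M) < ennreal (1 / lam)"
    by (auto simp: INF_less_iff)
  then have n: "ennreal lam * (\<integral>\<^sup>+ x. min (B x) (ennreal (1 / real (Suc n)) * D x) \<partial>M) \<le> 1"
    using \<open>0 < lam\<close> by (simp add: ennreal_mult_less_one_iff less_imp_le)
  define b where "b = real (Suc n)"
  have "ennreal lam * capped_mean M B D b
      = ennreal b * (ennreal lam * (\<integral>\<^sup>+ x. min (B x) (ennreal (1 / real (Suc n)) * D x) \<partial>M))"
    by (simp add: capped_mean_rescale b_def mult.left_commute)
  also have "\<dots> \<le> ennreal b"
    using mult_left_mono[OF n] by simp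
  finally show ?thesis by (intro exI[of _ b]) (simp add: b_def)
qed

lemma capped_mean_fixpoint_exists:
  assumes [measurable]: "B \<in> borel_measurable M" "D \<in> borel_measurable M"
    and "AE x in M. D x \<noteq> 0" and "0 < lam"
    and "1 < ennreal lam * (\<integral>\<^sup>+ x. B x \<partial>M)"
    and "ennreal lam * (\<integral>\<^sup>+ x. B x * indicator {y. D y = \<infinity>} x \<partial>M) < 1"
    and "(\<integral>\<^sup>+ x. min (B x) (D x) \<partial>M) < \<infinity>"
  shows "\<exists>z>0. ennreal z = ennreal lam * capped_mean M B D z"
proof -
  obtain a where a: "0 < a" "a \<le> 1" "ennreal a \<le> ennreal lam * capped_mean M B D a"
    using ex_small_le_capped_mean assms by blast
  obtain b where b: "1 \<le> b" "ennreal lam * capped_mean M B D b \<le> ennreal b"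
    using ex_large_capped_mean_le assms by blast
  have "mono (\<lambda>z. ennreal lam * capped_mean M B D z)"
    by (intro monoI mult_left_mono monoD[OF mono_capped_mean]) auto
  then obtain z where "z \<in> {a..b}" "ennreal lam * capped_mean M B D z = ennreal z"
    using mono_fixpoint_between[of _ a b] a b by fastforce
  then show ?thesis using \<open>0 < a\<close> by (intro exI[of _ z]) auto
qed

lemma capped_mean_ratio_less:
  assumes [measurable]: "B \<in> borel_measurable M" "D \<in> borel_measurable M"
    and D_pos: "AE x in M. D x \<noteq> 0" and z: "0 < z1" "z1 < z2"
    and finite: "capped_mean M B D z2 \<noteq> \<infinity>"
    and not_linear: "capped_mean M B D z1 \<noteq> ennreal z1 * (\<integral>\<^sup>+ x. B x \<partial>M)"
  shows "ennreal z1 * capped_mean M B D z2 < ennreal z2 * capped_mean M B D z1"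
proof -
  define f where "f x = ennreal z1 * min (ennreal z2 * B x) (D x)" for x
  define g where "g x = ennreal z2 * min (ennreal z1 * B x) (D x)" for x
  have [measurable]: "f \<in> borel_measurable M" "g \<in> borel_measurable M"
    unfolding f_def g_def by measurable
  have int_f: "(\<integral>\<^sup>+ x. f x \<partial>M) = ennreal z1 * capped_mean M B D z2"
    unfolding f_def capped_mean_def by (rule nn_integral_cmult) measurable
  have int_g: "(\<integral>\<^sup>+ x. g x \<partial>M) = ennreal z2 * capped_mean M B D z1"
    unfolding g_def capped_mean_def by (rule nn_integral_cmult) measurable
  have "\<not> (AE x in M. g x \<le> f x)"
  proof
    assume "AE x in M. g x \<le> f x"
    with D_pos have "AE x in M. min (ennreal z1 * B x) (D x) = ennreal z1 * B x"
      by eventually_elim (use z in \<open>auto simp: f_def g_def min_def not_le dest: ennreal_mult_min_less\<close>)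
    then have "capped_mean M B D z1 = (\<integral>\<^sup>+ x. ennreal z1 * B x \<partial>M)"
      unfolding capped_mean_def by (rule nn_integral_cong_AE)
    with not_linear show False by (simp add: nn_integral_cmult)
  qed
  moreover have "AE x in M. f x \<le> g x"
    using z by (intro AE_I2) (simp add: f_def g_def ennreal_mult_min_le)
  ultimately show ?thesis
    using nn_integral_less[of f M g] finite int_f int_g by (simp add: ennreal_mult_eq_top_iff)
qed

lemma capped_mean_fixpoint_unique:
  assumes [measurable]: "B \<in> borel_measurable M" "D \<in> borel_measurable M"
    and D_pos: "AE x in M. D x \<noteq> 0" and lam: "0 < lam"
    and rho: "ennreal lam * (\<integral>\<^sup>+ x. B x \<partial>M) \<noteq> 1"
  assumes "0 < z1" "ennreal z1 = ennreal lam * capped_mean M B D z1"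
    and "0 < z2" "ennreal z2 = ennreal lam * capped_mean M B D z2"
  shows "z1 = z2"
proof -
  have False if z: "0 < z1" "z1 < z2"
    and fix1: "ennreal z1 = ennreal lam * capped_mean M B D z1"
    and fix2: "ennreal z2 = ennreal lam * capped_mean M B D z2" for z1 z2
  proof -
    have "capped_mean M B D z2 \<noteq> \<infinity>"
      using fix2 lam by (auto simp: ennreal_mult_top)
    moreover have "capped_mean M B D z1 \<noteq> ennreal z1 * (\<integral>\<^sup>+ x. B x \<partial>M)"
    proof
      assume "capped_mean M B D z1 = ennreal z1 * (\<integral>\<^sup>+ x. B x \<partial>M)"
      then have "ennreal z1 * 1 = ennreal z1 * (ennreal lam * (\<integral>\<^sup>+ x. B x \<partial>M))"
        using fix1 by (simp add: mult.left_commute)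
      then have "ennreal lam * (\<integral>\<^sup>+ x. B x \<partial>M) = 1"
        using z by (subst (asm) ennreal_mult_cancel_left) auto
      with rho show False ..
    qed
    ultimately have "ennreal z1 * capped_mean M B D z2 < ennreal z2 * capped_mean M B D z1"
      by (rule capped_mean_ratio_less[OF assms(1,2) D_pos z])
    then have "ennreal lam * (ennreal z1 * capped_mean M B D z2)
        < ennreal lam * (ennreal z2 * capped_mean M B D z1)"
      using lam by (intro ennreal_mult_strict_left_mono) auto
    then show False
      using fix1 fix2 by (simp add: mult.left_commute mult.commute)
  qed
  then show ?thesis using assms by (metis linorder_neq_iff)
qed

theorem mainTheorem7:
  fixes \<theta> :: "(ennreal \<times> ennreal) measure" and lam :: real
  assumes prob: "prob_space \<theta>"
    and sets_eq: "sets \<theta> = sets borel"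
    and B0: "emeasure \<theta> ({0} \<times> UNIV) = 0"
    and D0: "emeasure \<theta> (UNIV \<times> {0}) = 0"
    and inf_inf: "emeasure \<theta> {(\<infinity>, \<infinity>)} = 0"
    and lam_pos: "lam > 0"
    and cond1: "ennreal lam * (\<integral>\<^sup>+ x. fst x * indicator {y. snd y = \<infinity>} x \<partial>\<theta>) < 1"
    and cond2: "(\<integral>\<^sup>+ x. min (fst x) (snd x) \<partial>\<theta>) < \<infinity>"
    and rho: "ennreal lam * (\<integral>\<^sup>+ x. fst x \<partial>\<theta>) > 1"
  shows "\<exists>!z::real. 0 < z \<and>
           ennreal z = ennreal lam * (\<integral>\<^sup>+ x. min (ennreal z * fst x) (snd x) \<partial>\<theta>)"
proof -
  have "fst \<in> borel_measurable borel"
    and "snd \<in> borel_measurable (borel :: (ennreal \<times> ennreal) measure)"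
    by (intro borel_measurable_continuous_onI continuous_intros)+
  then have meas: "fst \<in> borel_measurable \<theta>" "snd \<in> borel_measurable \<theta>"
    unfolding measurable_cong_sets[OF sets_eq refl] .
  have "UNIV \<times> {0} \<in> null_sets \<theta>"
    using D0 sets_eq by (simp add: null_sets_def borel_closed closed_Times)
  then have D_pos: "AE x in \<theta>. snd x \<noteq> 0"
    by (rule AE_I') auto
  obtain z where "0 < z" "ennreal z = ennreal lam * capped_mean \<theta> fst snd z"
    using capped_mean_fixpoint_exists[OF meas D_pos lam_pos rho cond1 cond2] by blast
  then show ?thesis
    using capped_mean_fixpoint_unique[OF meas D_pos lam_pos] rho
    unfolding capped_mean_def by (intro ex1I[of _ z]) auto
qed

end
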